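(* Let $A$ be a $*$-algebra with $*$-differential calculus $(\Omega,{\rm d},\wedge)$, let $\mathcal{S}$ be an $A$-bimodule, and let $\epsilon,\epsilon'\in\{1,-1\}$. Let $\mathcal{J}:\mathcal{S}\to\mathcal{S}$ be an antilinear map such that $\mathcal{J}(a.\phi)=\mathcal{J}(\phi).a^*$ and $\mathcal{J}(\phi.a)=a^*.\mathcal{J}(\phi)$ for all $a\in A,\phi\in\mathcal S$ (equivalently $j:\mathcal S\to\overline{\mathcal S}$, $j(\phi)=\overline{\mathcal J\phi}$, is a bimodule map) and $\mathcal{J}^2=\epsilon\,\mathrm{id}$. Let $(\nabla_{\mathcal{S}},\sigma_{\mathcal{S}})$ be a left bimodule connection on $\mathcal{S}$ with $\sigma_{\mathcal{S}}$ invertible, such that $(\mathrm{id}\otimes j)\nabla_{\mathcal{S}}=\nabla_{\overline{\mathcal{S}}}\circ j$, where $\nabla_{\overline{\mathcal S}}$ is the canonical left connection on $\overline{\mathcal S}$. Let $\triangleright:\Omega^1\otimes_A\mathcal{S}\to\mathcal{S}$ be an $A$-bimodule map such that $$\mathcal{J}(\xi\triangleright\phi)=\epsilon'\,\triangleright\big(\sigma_{\mathcal{S}}(\mathcal{J}\phi\otimes\xi^* )\big)\quad\text{for all }\xi\in\Omega^1,\ \phi\in\mathcal{S}$$ (in bimodule language $j\circ\triangleright=\epsilon'\,\overline{\triangleright\circ\sigma_{\mathcal S}}\,\Upsilon^{-1}(\star\otimes j)$). Put $D=\triangleright\circ\nabla_{\mathcal{S}}:\mathcal{S}\to\mathcal{S}$.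 Then: (a) $\mathcal J^2=\epsilon$; $a.(\mathcal{J}b\mathcal{J}^{-1}\phi)=\mathcal{J}b\mathcal{J}^{-1}(a.\phi)$ for all $a,b\in A$; $\mathcal{J}D=\epsilon' D\mathcal{J}$; and $[[D,a],\mathcal{J}b\mathcal{J}^{-1}]=0$ for all $a,b\in A$ (the algebraic conditions of an odd real spectral triple). (b) If moreover there is an $A$-bimodule map $\gamma:\mathcal{S}\to\mathcal{S}$ with $\gamma^2=\mathrm{id}$, $\nabla_{\mathcal{S}}\gamma=(\mathrm{id}\otimes\gamma)\nabla_{\mathcal{S}}$, $\gamma\circ\triangleright=-\triangleright\circ(\mathrm{id}\otimes\gamma)$ and $\mathcal{J}\gamma=\epsilon''\gamma\mathcal{J}$ for a sign $\epsilon''$, then in addition $\gamma$ commutes with the left action of $A$, $\mathcal J\gamma=\epsilon''\gamma\mathcal J$ and $D\gamma=-\gamma D$ (the algebraic conditions of an even real spectral triple).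
   Context: Elements of $A$ act on $\mathcal S$ by left multiplication and are identified with these operators; $[D,a]$ is the commutator. Left bimodule connection: a linear $\nabla_{\mathcal S}:\mathcal S\to\Omega^1\otimes_A\mathcal S$ with $\nabla_{\mathcal S}(a.\phi)={\rm d}a\otimes\phi+a.\nabla_{\mathcal S}\phi$, together with a bimodule map $\sigma_{\mathcal S}:\mathcal S\otimes_A\Omega^1\to\Omega^1\otimes_A\mathcal S$ with $\sigma_{\mathcal S}(\phi\otimes{\rm d}a)=\nabla_{\mathcal S}(\phi.a)-\nabla_{\mathcal S}(\phi).a$. Conjugate bimodule: for an $A$-bimodule $E$, $\overline E$ is the set $\{\overline e: e\in E\}$ with $\overline e+\overline f=\overline{e+f}$, $\lambda\overline e=\overline{\lambda^* e}$ ($\lambda\in\mathbb C$), $a.\overline e=\overline{e.a^*}$, $\overline e.a=\overline{a^*.e}$. For a bimodule map $\theta$, $\overline\theta(\overline e)=\overline{\theta(e)}$. $\Upsilon:\overline{E\otimes_AF}\to\overline F\otimes_A\overline E$, $\Upsilon(\overline{e\otimes f})=\overline f\otimes\overline e$. $\star:\Omega\to\overline\Omega$, $\star\xi=\overline{\xi^*}$. The canonical left connection on $\overline{\mathcal S}$ is $\nabla_{\overline{\mathcal S}}(\overline\phi)=(\star^{-1}\otimes\mathrm{id})\Upsilon\,\overline{\sigma_{\mathcal S}^{-1}\nabla_{\mathcal S}\phi}$. *)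

theory Defs
  imports Complex_Main "HOL-Library.Poly_Mapping"
begin

definition star_algebra :: "(complex \<Rightarrow> 'a::ring_1) \<Rightarrow> ('a \<Rightarrow> 'a) \<Rightarrow> bool" where
  "star_algebra emb st \<longleftrightarrow>
     (\<forall>c e. emb (c + e) = emb c + emb e) \<and> (\<forall>c e. emb (c * e) = emb c * emb e) \<and> emb 1 = 1 \<and>
     (\<forall>c x. emb c * x = x * emb c) \<and>
     (\<forall>x y. st (x + y) = st x + st y) \<and> (\<forall>x y. st (x * y) = st y * st x) \<and>
     (\<forall>c x. st (emb c * x) = emb (cnj c) * st x) \<and> (\<forall>x. st (st x) = x)"

text \<open>A-bimodule (unital, complex scalars acting centrally through emb, so M is a
  complex vector space via  c.m = (emb c).m = m.(emb c)).\<close>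
definition bimodule :: "(complex \<Rightarrow> 'a::ring_1) \<Rightarrow> ('a \<Rightarrow> 'm::ab_group_add \<Rightarrow> 'm) \<Rightarrow> ('m \<Rightarrow> 'a \<Rightarrow> 'm) \<Rightarrow> bool" where
  "bimodule emb l r \<longleftrightarrow>
     (\<forall>a m n. l a (m + n) = l a m + l a n) \<and> (\<forall>a b m. l (a + b) m = l a m + l b m) \<and>
     (\<forall>a b m. l (a * b) m = l a (l b m)) \<and> (\<forall>m. l 1 m = m) \<and>
     (\<forall>a m n. r (m + n) a = r m a + r n a) \<and> (\<forall>a b m. r m (a + b) = r m a + r m b) \<and>
     (\<forall>a b m. r m (a * b) = r (r m a) b) \<and> (\<forall>m. r m 1 = m) \<and>
     (\<forall>a b m. l a (r m b) = r (l a m) b) \<and> (\<forall>c m. l (emb c) m = r m (emb c))"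

text \<open>Bimodule map (additive and commuting with both actions; complex-linearity follows).\<close>
definition bimod_map :: "('a \<Rightarrow> 'm \<Rightarrow> 'm) \<Rightarrow> ('m \<Rightarrow> 'a \<Rightarrow> 'm) \<Rightarrow> ('a \<Rightarrow> 'n \<Rightarrow> 'n) \<Rightarrow> ('n \<Rightarrow> 'a \<Rightarrow> 'n)
    \<Rightarrow> ('m::ab_group_add \<Rightarrow> 'n::ab_group_add) \<Rightarrow> bool" where
  "bimod_map lM rM lN rN f \<longleftrightarrow>
     (\<forall>x y. f (x + y) = f x + f y) \<and> (\<forall>a x. f (lM a x) = lN a (f x)) \<and> (\<forall>a x. f (rM x a) = rN (f x) a)"

definition star_calculus :: "(complex \<Rightarrow> 'a::ring_1) \<Rightarrow> ('a \<Rightarrow> 'a) \<Rightarrow> ('a \<Rightarrow> 'w::ab_group_add \<Rightarrow> 'w)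
    \<Rightarrow> ('w \<Rightarrow> 'a \<Rightarrow> 'w) \<Rightarrow> ('a \<Rightarrow> 'w) \<Rightarrow> ('w \<Rightarrow> 'w) \<Rightarrow> bool" where
  "star_calculus emb st lw rw d stw \<longleftrightarrow>
     star_algebra emb st \<and> bimodule emb lw rw \<and>
     (\<forall>a b. d (a + b) = d a + d b) \<and> (\<forall>c a. d (emb c * a) = lw (emb c) (d a)) \<and>
     (\<forall>a b. d (a * b) = rw (d a) b + lw a (d b)) \<and>
     (\<forall>\<xi>. \<exists>(n::nat) f g. \<xi> = (\<Sum>i<n. lw (f i) (d (g i)))) \<and>
     (\<forall>\<xi> \<eta>. stw (\<xi> + \<eta>) = stw \<xi> + stw \<eta>) \<and>
     (\<forall>a \<xi>. stw (lw a \<xi>) = rw (stw \<xi>) (st a)) \<and> (\<forall>a \<xi>. stw (rw \<xi> a) = lw (st a) (stw \<xi>)) \<and>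
     (\<forall>\<xi>. stw (stw \<xi>) = \<xi>) \<and> (\<forall>a. stw (d a) = d (st a))"

definition zsmul :: "int \<Rightarrow> 'g::ab_group_add \<Rightarrow> 'g" where
  "zsmul k x = (\<Sum>_<nat k. x) - (\<Sum>_<nat (- k). x)"

inductive_set tensor_rel :: "('m::ab_group_add \<Rightarrow> 'a \<Rightarrow> 'm) \<Rightarrow> ('a \<Rightarrow> 'n::ab_group_add \<Rightarrow> 'n)
    \<Rightarrow> ('m \<times> 'n \<Rightarrow>\<^sub>0 int) set"
  for rM lN where
  zero: "0 \<in> tensor_rel rM lN"
| add: "f \<in> tensor_rel rM lN \<Longrightarrow> g \<in> tensor_rel rM lN \<Longrightarrow> f + g \<in> tensor_rel rM lN"
| neg: "f \<in> tensor_rel rM lN \<Longrightarrow> - f \<in> tensor_rel rM lN"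
| addl: "Poly_Mapping.single (m + m', n) 1 - Poly_Mapping.single (m, n) 1
          - Poly_Mapping.single (m', n) 1 \<in> tensor_rel rM lN"
| addr: "Poly_Mapping.single (m, n + n') 1 - Poly_Mapping.single (m, n) 1
          - Poly_Mapping.single (m, n') 1 \<in> tensor_rel rM lN"
| bal: "Poly_Mapping.single (rM m a, n) 1 - Poly_Mapping.single (m, lN a n) 1 \<in> tensor_rel rM lN"

definition free_eval :: "('m \<Rightarrow> 'n \<Rightarrow> 't::ab_group_add) \<Rightarrow> ('m \<times> 'n \<Rightarrow>\<^sub>0 int) \<Rightarrow> 't" where
  "free_eval tens f = (\<Sum>p\<in>Poly_Mapping.keys f. zsmul (Poly_Mapping.lookup f p) (tens (fst p) (snd p)))"

text \<open>(T, tens) is the tensor product M (x)_A N of bimodules, with its bimodule structure: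
  the induced map from the free abelian group on M x N is onto with kernel exactly the
  balanced-biadditive relations.\<close>
definition tensor_product :: "(complex \<Rightarrow> 'a::ring_1) \<Rightarrow> ('a \<Rightarrow> 'm::ab_group_add \<Rightarrow> 'm) \<Rightarrow> ('m \<Rightarrow> 'a \<Rightarrow> 'm)
    \<Rightarrow> ('a \<Rightarrow> 'n::ab_group_add \<Rightarrow> 'n) \<Rightarrow> ('n \<Rightarrow> 'a \<Rightarrow> 'n)
    \<Rightarrow> ('a \<Rightarrow> 't::ab_group_add \<Rightarrow> 't) \<Rightarrow> ('t \<Rightarrow> 'a \<Rightarrow> 't) \<Rightarrow> ('m \<Rightarrow> 'n \<Rightarrow> 't) \<Rightarrow> bool" where
  "tensor_product emb lM rM lN rN lT rT tens \<longleftrightarrow>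
     bimodule emb lT rT \<and>
     (\<forall>a m n. lT a (tens m n) = tens (lM a m) n) \<and>
     (\<forall>a m n. rT (tens m n) a = tens m (rN n a)) \<and>
     (\<forall>x. \<exists>f. free_eval tens f = x) \<and>
     (\<forall>f. free_eval tens f = 0 \<longleftrightarrow> f \<in> tensor_rel rM lN)"

end

theory Submission
  imports Defs
begin

text \<open>First, since \<open>\<J>\<close> is invertible and
  \<open>\<J>(b.\<phi>) = \<J>(\<phi>).b\<^sup>*\<close>, the operator \<open>\<J> b \<J>\<^sup>-\<^sup>1\<close> is right multiplication by \<open>b\<^sup>*\<close>; and by the
  Leibniz rule \<open>[D,a]\<phi> = da \<triangleright> \<phi>\<close>, which commutes with right multiplication because
  \<open>\<triangleright>\<close> is a bimodule map. Second, writing \<open>\<nabla>\<phi> = \<Sum> \<xi>\<^sub>k \<otimes> \<chi>\<^sub>k\<close>, the compatibility of \<open>\<nabla>\<close>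
  with \<open>j\<close> says, after applying the well-defined flip \<open>\<xi> \<otimes> \<phi> \<mapsto> \<phi> \<otimes> \<xi>\<^sup>*\<close> from
  \<open>\<Omega>\<^sup>1\<close> tensored with the conjugate of \<open>\<S>\<close> to \<open>\<S> \<otimes> \<Omega>\<^sup>1\<close>, that \<open>\<sigma>\<^sup>-\<^sup>1 \<nabla>(\<J>\<phi>) = \<Sum> \<J>\<chi>\<^sub>k \<otimes> \<xi>\<^sub>k\<^sup>*\<close>; feeding this into the
  reality condition for \<open>\<triangleright>\<close> gives \<open>\<J>D = \<epsilon>'D\<J>\<close>.\<close>

lemma zsmul_0 [simp]: "zsmul 0 x = 0"
  by (simp add: zsmul_def)

lemma zsmul_plus_1: "zsmul (k + 1) x = zsmul k x + x"
proof (cases "k \<ge> 0")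
  case True
  then have "nat (k + 1) = Suc (nat k)" "nat (- (k + 1)) = 0" "nat (- k) = 0"
    by auto
  then show ?thesis by (simp add: zsmul_def)
next
  case False
  then have "nat (- k) = Suc (nat (- (k + 1)))" "nat (k + 1) = 0" "nat k = 0"
    by auto
  then show ?thesis by (simp add: zsmul_def)
qed

lemma zsmul_minus_1: "zsmul (k - 1) x = zsmul k x - x"
  using zsmul_plus_1[of "k - 1" x] by simp

lemma zsmul_1 [simp]: "zsmul 1 x = x"
  using zsmul_plus_1[of 0 x] by simp

lemma zsmul_add: "zsmul (k + l) x = zsmul k x + zsmul l x"
proof (induction l rule: int_induct[where k = 0])
  case base
  then show ?case by simp
next
  case (step1 i)
  then show ?case
    using zsmul_plus_1[of "k + i" x] zsmul_plus_1[of i x] by (simp add: add.assoc[symmetric])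
next
  case (step2 i)
  have "zsmul (k + (i - 1)) x = zsmul (k + i) x - x"
    using zsmul_minus_1[of "k + i" x] by (simp add: add_diff_eq)
  also have "\<dots> = zsmul k x + zsmul (i - 1) x"
    using step2(2) zsmul_minus_1[of i x] by simp
  finally show ?case .
qed

lemma (in additive) zsmul: "f (zsmul k x) = zsmul k (f x)"
  by (induction k rule: int_induct[where k = 0])
    (simp_all add: zero zsmul_plus_1 zsmul_minus_1 add diff)

lemma free_eval_superset:
  assumes "finite S" "Poly_Mapping.keys f \<subseteq> S"
  shows "free_eval F f = (\<Sum>p\<in>S. zsmul (Poly_Mapping.lookup f p) (F (fst p) (snd p)))"
  unfolding free_eval_def
  by (rule sum.mono_neutral_left) (use assms in \<open>auto simp: not_in_keys_iff_lookup_eq_zero\<close>)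

lemma additive_free_eval:
  fixes F :: "'m \<Rightarrow> 'n \<Rightarrow> 't::ab_group_add"
  shows "additive (free_eval F)"
proof
  fix f g :: "'m \<times> 'n \<Rightarrow>\<^sub>0 int"
  let ?S = "Poly_Mapping.keys f \<union> Poly_Mapping.keys g \<union> Poly_Mapping.keys (f + g)"
  have "free_eval F (f + g) = (\<Sum>p\<in>?S. zsmul (Poly_Mapping.lookup (f + g) p) (F (fst p) (snd p)))"
    by (rule free_eval_superset) auto
  also have "\<dots> = (\<Sum>p\<in>?S. zsmul (Poly_Mapping.lookup f p) (F (fst p) (snd p)))
      + (\<Sum>p\<in>?S. zsmul (Poly_Mapping.lookup g p) (F (fst p) (snd p)))"
    by (simp add: lookup_add zsmul_add sum.distrib)
  also have "\<dots> = free_eval F f + free_eval F g"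
    by (subst (1 2) free_eval_superset[where S = ?S]) auto
  finally show "free_eval F (f + g) = free_eval F f + free_eval F g" .
qed

interpretation free_eval: additive "free_eval F"
  by (rule additive_free_eval)

lemma free_eval_single: "free_eval F (Poly_Mapping.single p 1) = F (fst p) (snd p)"
  by (simp add: free_eval_def)

lemma free_eval_tensor_rel:
  assumes "\<And>m m' n. F (m + m') n = F m n + F m' n"
    and "\<And>m n n'. F m (n + n') = F m n + F m n'"
    and "\<And>m a n. F (rM m a) n = F m (lN a n)"
    and "f \<in> tensor_rel rM lN"
  shows "free_eval F f = 0"
  using assms(4)
  by induction
    (simp_all add: free_eval.zero free_eval.add free_eval.minus free_eval.diff free_eval_single
      assms(1-3))

context
  fixes emb :: "complex \<Rightarrow> 'a::ring_1"
    and lM :: "'a \<Rightarrow> 'm::ab_group_add \<Rightarrow> 'm" and rM and lN :: "'a \<Rightarrow> 'n::ab_group_add \<Rightarrow> 'n" and rN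
    and lT :: "'a \<Rightarrow> 't::ab_group_add \<Rightarrow> 't" and rT and tens
  assumes tensor: "tensor_product emb lM rM lN rN lT rT tens"
begin

lemma tensor_product_kernel: "free_eval tens f = 0 \<longleftrightarrow> f \<in> tensor_rel rM lN"
  using tensor by (simp add: tensor_product_def)

lemma tensor_product_add_left: "tens (m + m') n = tens m n + tens m' n"
  using tensor_product_kernel[THEN iffD2, OF tensor_rel.addl[where m = m and m' = m' and n = n]]
  unfolding free_eval.diff free_eval_single by (simp add: algebra_simps)

lemma tensor_product_add_right: "tens m (n + n') = tens m n + tens m n'"
  using tensor_product_kernel[THEN iffD2, OF tensor_rel.addr[where m = m and n = n and n' = n']]
  unfolding free_eval.diff free_eval_single by (simp add: algebra_simps)

lemma tensor_product_balanced: "tens (rM m a) n = tens m (lN a n)"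
  using tensor_product_kernel[THEN iffD2, OF tensor_rel.bal[where m = m and a = a and n = n]]
  unfolding free_eval.diff free_eval_single by simp

lemma tensor_product_right_action: "rT (tens m n) a = tens m (rN n a)"
  using tensor unfolding tensor_product_def by blast

lemma tensor_product_sum_simple: "\<exists>N x y. t = (\<Sum>k<(N::nat). tens (x k) (y k))"
proof -
  obtain f where f: "free_eval tens f = t"
    using tensor unfolding tensor_product_def by blast
  have "zsmul k (tens m n) = tens (zsmul k m) n" for k m n
  proof -
    have "additive (\<lambda>m. tens m n)"
      by (simp add: additive_def tensor_product_add_left)
    from additive.zsmul[OF this] show ?thesis by simp
  qed
  then have t: "t = (\<Sum>p\<in>Poly_Mapping.keys f. tens (zsmul (Poly_Mapping.lookup f p) (fst p)) (snd p))"
    using f by (simp add: free_eval_def)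
  obtain h where h: "bij_betw h {0..<card (Poly_Mapping.keys f)} (Poly_Mapping.keys f)"
    using ex_bij_betw_nat_finite[OF finite_keys] by blast
  define x where "x k = zsmul (Poly_Mapping.lookup f (h k)) (fst (h k))" for k
  define y where "y k = snd (h k)" for k
  have "t = (\<Sum>k\<in>{0..<card (Poly_Mapping.keys f)}. tens (x k) (y k))"
    unfolding t x_def y_def using sum.reindex_bij_betw[OF h, symmetric] by simp
  then show ?thesis
    by (auto simp: atLeast0LessThan)
qed

text \<open>The universal property of \<open>M \<otimes>\<^sub>A N\<close>: biadditive balanced maps factor through it.\<close>
lemma tensor_product_sums_eq_map:
  fixes F :: "'m \<Rightarrow> 'n \<Rightarrow> 'x::ab_group_add"
  assumes "\<And>m m' n. F (m + m') n = F m n + F m' n"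
    and "\<And>m n n'. F m (n + n') = F m n + F m n'"
    and "\<And>m a n. F (rM m a) n = F m (lN a n)"
    and "(\<Sum>k<(N::nat). tens (x k) (y k)) = (\<Sum>i<(M::nat). tens (x' i) (y' i))"
  shows "(\<Sum>k<N. F (x k) (y k)) = (\<Sum>i<M. F (x' i) (y' i))"
proof -
  define f where "f = (\<Sum>k<N. Poly_Mapping.single (x k, y k) (1::int))
    - (\<Sum>i<M. Poly_Mapping.single (x' i, y' i) 1)"
  have eval: "free_eval G f = (\<Sum>k<N. G (x k) (y k)) - (\<Sum>i<M. G (x' i) (y' i))"
    for G :: "'m \<Rightarrow> 'n \<Rightarrow> 'z::ab_group_add"
    unfolding f_def free_eval.diff free_eval.sum free_eval_single by simp
  have "f \<in> tensor_rel rM lN"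
    using assms(4) eval[of tens] by (simp add: tensor_product_kernel[symmetric])
  then have "free_eval F f = 0"
    by (rule free_eval_tensor_rel[where F = F and rM = rM and lN = lN, OF assms(1-3)])
  then show ?thesis
    using eval[of F] by simp
qed

end

lemma conjugate_flip_eq:
  assumes calc: "star_calculus emb st lw rw d stw"
    and tensSW: "tensor_product emb ls rs lw rw lu ru tSW"
    and tensWSbar: "tensor_product emb lw rw (\<lambda>a \<phi>. rs \<phi> (st a)) (\<lambda>\<phi> a. ls (st a) \<phi>) lv rv tWSb"
    and "(\<Sum>k<(N::nat). tWSb (\<xi> k) (\<phi> k)) = (\<Sum>i<(M::nat). tWSb (\<xi>' i) (\<phi>' i))"
  shows "(\<Sum>k<N. tSW (\<phi> k) (stw (\<xi> k))) = (\<Sum>i<M. tSW (\<phi>' i) (stw (\<xi>' i)))"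
proof (rule tensor_product_sums_eq_map[OF tensWSbar, where F = "\<lambda>\<xi> \<phi>. tSW \<phi> (stw \<xi>)"])
  have stw_add: "stw (\<xi> + \<eta>) = stw \<xi> + stw \<eta>" and stw_right: "stw (rw \<xi> a) = lw (st a) (stw \<xi>)"
    for \<xi> \<eta> a
    using calc by (simp_all add: star_calculus_def)
  show "tSW \<phi> (stw (\<xi> + \<xi>')) = tSW \<phi> (stw \<xi>) + tSW \<phi> (stw \<xi>')" for \<xi> \<xi>' \<phi>
    by (simp add: stw_add tensor_product_add_right[OF tensSW])
  show "tSW (\<phi> + \<phi>') (stw \<xi>) = tSW \<phi> (stw \<xi>) + tSW \<phi>' (stw \<xi>)" for \<xi> \<phi> \<phi>'
    by (rule tensor_product_add_left[OF tensSW])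
  show "tSW \<phi> (stw (rw \<xi> a)) = tSW (rs \<phi> (st a)) (stw \<xi>)" for \<xi> a \<phi>
    by (simp add: stw_right tensor_product_balanced[OF tensSW])
qed (fact assms(4))

lemma bimod_map_additive: "bimod_map lM rM lN rN f \<Longrightarrow> additive f"
  by (simp add: bimod_map_def additive_def)

lemma bimod_map_left: "bimod_map lM rM lN rN f \<Longrightarrow> f (lM a x) = lN a (f x)"
  by (simp add: bimod_map_def)

lemma bimod_map_right: "bimod_map lM rM lN rN f \<Longrightarrow> f (rM x a) = rN (f x) a"
  by (simp add: bimod_map_def)

lemma bimodule_left_right_commute: "bimodule emb l r \<Longrightarrow> l a (r m b) = r (l a m) b"
  by (simp add: bimodule_def)

lemma sign_action_involutive:
  assumes "star_algebra emb st" "bimodule emb ls rs" "\<epsilon> \<in> {1, -1}"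
  shows "ls (emb \<epsilon>) (ls (emb \<epsilon>) \<phi>) = \<phi>"
proof -
  have "\<epsilon> * \<epsilon> = 1"
    using assms(3) by auto
  have "ls (emb \<epsilon>) (ls (emb \<epsilon>) \<phi>) = ls (emb \<epsilon> * emb \<epsilon>) \<phi>"
    using assms(2) unfolding bimodule_def by metis
  also have "\<dots> = ls (emb (\<epsilon> * \<epsilon>)) \<phi>"
    using assms(1) unfolding star_algebra_def by metis
  also have "\<dots> = \<phi>"
    using assms(1,2) \<open>\<epsilon> * \<epsilon> = 1\<close> unfolding star_algebra_def bimodule_def by metis
  finally show ?thesis .
qed

lemma bij_if_square_sign:
  assumes "star_algebra emb st" "bimodule emb ls rs" "\<epsilon> \<in> {1, -1}"
    and J_sq: "\<And>\<phi>. J (J \<phi>) = ls (emb \<epsilon>) \<phi>"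
  shows "bij J"
proof (rule bijI)
  note sign = sign_action_involutive[OF assms(1-3)]
  show "inj J"
  proof (rule injI)
    fix \<phi> \<psi>
    assume "J \<phi> = J \<psi>"
    then have "ls (emb \<epsilon>) (J (J \<phi>)) = ls (emb \<epsilon>) (J (J \<psi>))"
      by simp
    then show "\<phi> = \<psi>"
      by (simp only: J_sq sign)
  qed
  show "surj J"
    by (rule surjI[of J "\<lambda>\<phi>. J (ls (emb \<epsilon>) \<phi>)"]) (simp only: J_sq sign)
qed

lemma conj_left_action_eq_right_action:
  assumes "surj J" and J_left: "\<And>a \<phi>. J (ls a \<phi>) = rs (J \<phi>) (st a)"
  shows "J (ls b (inv J \<phi>)) = rs \<phi> (st b)"
  by (simp add: J_left surj_f_inv_f[OF assms(1)])

lemma commutator_Dirac_left_action: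
  assumes "bimod_map lt rt ls rs tri"
    and "\<And>a \<phi>. nabla (ls a \<phi>) = tWS (d a) \<phi> + lt a (nabla \<phi>)"
  shows "tri (nabla (ls a \<phi>)) - ls a (tri (nabla \<phi>)) = tri (tWS (d a) \<phi>)"
  by (simp only: assms(2) additive.add[OF bimod_map_additive[OF assms(1)]]
      bimod_map_left[OF assms(1)] add_diff_cancel)

lemma real_structure_Dirac:
  assumes calc: "star_calculus emb st lw rw d stw"
    and bimodS: "bimodule emb ls rs"
    and tensWS: "tensor_product emb lw rw ls rs lt rt tWS"
    and tensSW: "tensor_product emb ls rs lw rw lu ru tSW"
    and tensWSbar: "tensor_product emb lw rw (\<lambda>a \<phi>. rs \<phi> (st a)) (\<lambda>\<phi> a. ls (st a) \<phi>) lv rv tWSb"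
    and "additive J" "additive \<sigma>" "bij \<sigma>" "additive tri"
    and nabla_J: "\<And>\<phi> n \<xi> \<chi> m \<psi> \<eta>.
        nabla \<phi> = (\<Sum>k<(n::nat). tWS (\<xi> k) (\<chi> k)) \<Longrightarrow>
        inv \<sigma> (nabla (J \<phi>)) = (\<Sum>i<(m::nat). tSW (\<psi> i) (\<eta> i)) \<Longrightarrow>
        (\<Sum>k<n. tWSb (\<xi> k) (J (\<chi> k))) = (\<Sum>i<m. tWSb (stw (\<eta> i)) (\<psi> i))"
    and tri_J: "\<And>\<xi> \<phi>. J (tri (tWS \<xi> \<phi>)) = ls c (tri (\<sigma> (tSW (J \<phi>) (stw \<xi>))))"
  shows "J (tri (nabla \<phi>)) = ls c (tri (nabla (J \<phi>)))"
proof -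
  interpret J: additive J by fact
  interpret tri_\<sigma>: additive "tri \<circ> \<sigma>"
    using assms(7,9) by (simp add: additive_def)
  interpret ls_c: additive "ls c"
    using bimodS by (simp add: additive_def bimodule_def)
  obtain n \<xi> \<chi> where nabla_\<phi>: "nabla \<phi> = (\<Sum>k<(n::nat). tWS (\<xi> k) (\<chi> k))"
    using tensor_product_sum_simple[OF tensWS] by blast
  obtain m \<psi> \<eta> where nabla_J\<phi>: "inv \<sigma> (nabla (J \<phi>)) = (\<Sum>i<(m::nat). tSW (\<psi> i) (\<eta> i))"
    using tensor_product_sum_simple[OF tensSW] by blast
  have "stw (stw \<eta>) = \<eta>" for \<eta>
    using calc by (simp add: star_calculus_def)
  then have flip: "(\<Sum>k<n. tSW (J (\<chi> k)) (stw (\<xi> k))) = inv \<sigma> (nabla (J \<phi>))"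
    using conjugate_flip_eq[OF calc tensSW tensWSbar nabla_J[OF nabla_\<phi> nabla_J\<phi>]] nabla_J\<phi>
    by simp
  have "J (tri (nabla \<phi>)) = (\<Sum>k<n. ls c ((tri \<circ> \<sigma>) (tSW (J (\<chi> k)) (stw (\<xi> k)))))"
    unfolding nabla_\<phi> additive.sum[OF assms(9)] J.sum by (simp add: tri_J)
  also have "\<dots> = ls c (tri (\<sigma> (inv \<sigma> (nabla (J \<phi>)))))"
    unfolding ls_c.sum[symmetric] tri_\<sigma>.sum[symmetric] flip by simp
  also have "\<dots> = ls c (tri (nabla (J \<phi>)))"
    by (simp add: surj_f_inv_f[OF bij_is_surj[OF assms(8)]])
  finally show ?thesis .
qed

lemma grading_anticommutes_Dirac:
  assumes tensWS: "tensor_product emb lw rw ls rs lt rt tWS"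
    and nabla_\<gamma>: "\<And>n \<xi> \<chi>. nabla \<phi> = (\<Sum>k<(n::nat). tWS (\<xi> k) (\<chi> k)) \<Longrightarrow>
        nabla (\<gamma> \<phi>) = (\<Sum>k<n. tWS (\<xi> k) (\<gamma> (\<chi> k)))"
    and tri_\<gamma>: "\<And>n \<xi> \<chi>. \<gamma> (tri (\<Sum>k<(n::nat). tWS (\<xi> k) (\<chi> k)))
        = - tri (\<Sum>k<n. tWS (\<xi> k) (\<gamma> (\<chi> k)))"
  shows "tri (nabla (\<gamma> \<phi>)) = - \<gamma> (tri (nabla \<phi>))"
proof -
  obtain n \<xi> \<chi> where "nabla \<phi> = (\<Sum>k<(n::nat). tWS (\<xi> k) (\<chi> k))"
    using tensor_product_sum_simple[OF tensWS] by blast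
  then show ?thesis using nabla_\<gamma> tri_\<gamma> by simp
qed

theorem mainTheorem4:
  fixes emb :: "complex \<Rightarrow> 'a::ring_1" and st :: "'a \<Rightarrow> 'a"
    and lw :: "'a \<Rightarrow> 'w::ab_group_add \<Rightarrow> 'w" and rw :: "'w \<Rightarrow> 'a \<Rightarrow> 'w"
    and d :: "'a \<Rightarrow> 'w" and stw :: "'w \<Rightarrow> 'w"
    and ls :: "'a \<Rightarrow> 's::ab_group_add \<Rightarrow> 's" and rs :: "'s \<Rightarrow> 'a \<Rightarrow> 's"
    and lt :: "'a \<Rightarrow> 't::ab_group_add \<Rightarrow> 't" and rt :: "'t \<Rightarrow> 'a \<Rightarrow> 't" and tWS :: "'w \<Rightarrow> 's \<Rightarrow> 't"
    and lu :: "'a \<Rightarrow> 'u::ab_group_add \<Rightarrow> 'u" and ru :: "'u \<Rightarrow> 'a \<Rightarrow> 'u" and tSW :: "'s \<Rightarrow> 'w \<Rightarrow> 'u"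
    and lv :: "'a \<Rightarrow> 'v::ab_group_add \<Rightarrow> 'v" and rv :: "'v \<Rightarrow> 'a \<Rightarrow> 'v" and tWSb :: "'w \<Rightarrow> 's \<Rightarrow> 'v"
    and J :: "'s \<Rightarrow> 's" and \<epsilon> \<epsilon>' :: complex
    and nabla :: "'s \<Rightarrow> 't" and \<sigma> :: "'u \<Rightarrow> 't" and tri :: "'t \<Rightarrow> 's"
  assumes calc: "star_calculus emb st lw rw d stw"
    and bimodS: "bimodule emb ls rs"
    and tensWS: "tensor_product emb lw rw ls rs lt rt tWS"
    and tensSW: "tensor_product emb ls rs lw rw lu ru tSW"
    and tensWSbar: "tensor_product emb lw rw (\<lambda>a \<phi>. rs \<phi> (st a)) (\<lambda>\<phi> a. ls (st a) \<phi>) lv rv tWSb"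
    and eps: "\<epsilon> \<in> {1, -1}" and eps': "\<epsilon>' \<in> {1, -1}"
    and J_add: "\<forall>\<phi> \<psi>. J (\<phi> + \<psi>) = J \<phi> + J \<psi>"
    and J_antilin: "\<forall>c \<phi>. J (ls (emb c) \<phi>) = ls (emb (cnj c)) (J \<phi>)"
    and J_left: "\<forall>a \<phi>. J (ls a \<phi>) = rs (J \<phi>) (st a)"
    and J_right: "\<forall>a \<phi>. J (rs \<phi> a) = ls (st a) (J \<phi>)"
    and J_sq: "\<forall>\<phi>. J (J \<phi>) = ls (emb \<epsilon>) \<phi>"
    and nabla_add: "\<forall>\<phi> \<psi>. nabla (\<phi> + \<psi>) = nabla \<phi> + nabla \<psi>"
    and nabla_lin: "\<forall>c \<phi>. nabla (ls (emb c) \<phi>) = lt (emb c) (nabla \<phi>)"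
    and nabla_leibniz: "\<forall>a \<phi>. nabla (ls a \<phi>) = tWS (d a) \<phi> + lt a (nabla \<phi>)"
    and sigma_bimod: "bimod_map lu ru lt rt \<sigma>"
    and sigma_def: "\<forall>\<phi> a. \<sigma> (tSW \<phi> (d a)) = nabla (rs \<phi> a) - rt (nabla \<phi>) a"
    and sigma_inv: "bij \<sigma>"
    and nabla_J: "\<forall>\<phi> n \<xi> \<chi> m \<psi> \<eta>.
        nabla \<phi> = (\<Sum>k<(n::nat). tWS (\<xi> k) (\<chi> k)) \<longrightarrow>
        inv \<sigma> (nabla (J \<phi>)) = (\<Sum>i<(m::nat). tSW (\<psi> i) (\<eta> i)) \<longrightarrow>
        (\<Sum>k<(n::nat). tWSb (\<xi> k) (J (\<chi> k))) = (\<Sum>i<(m::nat). tWSb (stw (\<eta> i)) (\<psi> i))"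
    and tri_bimod: "bimod_map lt rt ls rs tri"
    and tri_J: "\<forall>\<xi> \<phi>. J (tri (tWS \<xi> \<phi>)) = ls (emb \<epsilon>') (tri (\<sigma> (tSW (J \<phi>) (stw \<xi>))))"
  shows "(\<forall>\<phi>. J (J \<phi>) = ls (emb \<epsilon>) \<phi>) \<and>
    (\<forall>a b \<phi>. ls a (J (ls b (inv J \<phi>))) = J (ls b (inv J (ls a \<phi>)))) \<and>
    (\<forall>\<phi>. J (tri (nabla \<phi>)) = ls (emb \<epsilon>') (tri (nabla (J \<phi>)))) \<and>
    (\<forall>a b \<phi>. let D = (\<lambda>\<psi>. tri (nabla \<psi>));
                 C = (\<lambda>\<psi>. D (ls a \<psi>) - ls a (D \<psi>));
                 B = (\<lambda>\<psi>. J (ls b (inv J \<psi>)))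
             in C (B \<phi>) - B (C \<phi>) = 0) \<and>
    (\<forall>\<gamma> \<epsilon>''. bimod_map ls rs ls rs \<gamma> \<and> (\<forall>\<phi>. \<gamma> (\<gamma> \<phi>) = \<phi>) \<and>
        (\<forall>\<phi> n \<xi> \<chi>. nabla \<phi> = (\<Sum>k<(n::nat). tWS (\<xi> k) (\<chi> k)) \<longrightarrow>
            nabla (\<gamma> \<phi>) = (\<Sum>k<(n::nat). tWS (\<xi> k) (\<gamma> (\<chi> k)))) \<and>
        (\<forall>n \<xi> \<chi>. \<gamma> (tri (\<Sum>k<(n::nat). tWS (\<xi> k) (\<chi> k))) = - tri (\<Sum>k<(n::nat). tWS (\<xi> k) (\<gamma> (\<chi> k)))) \<and>
        \<epsilon>'' \<in> {1, -1} \<and> (\<forall>\<phi>. J (\<gamma> \<phi>) = ls (emb \<epsilon>'') (\<gamma> (J \<phi>)))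
      \<longrightarrow> (\<forall>a \<phi>. \<gamma> (ls a \<phi>) = ls a (\<gamma> \<phi>)) \<and>
          (\<forall>\<phi>. J (\<gamma> \<phi>) = ls (emb \<epsilon>'') (\<gamma> (J \<phi>))) \<and>
          (\<forall>\<phi>. tri (nabla (\<gamma> \<phi>)) = - \<gamma> (tri (nabla \<phi>))))"
proof -
  have "star_algebra emb st"
    using calc unfolding star_calculus_def by (rule conjunct1)
  then have "bij J"
    by (rule bij_if_square_sign[OF _ bimodS eps J_sq[rule_format]])
  have conj_b: "J (ls b (inv J \<psi>)) = rs \<psi> (st b)" for b \<psi>
    by (rule conj_left_action_eq_right_action[OF bij_is_surj[OF \<open>bij J\<close>]]) (rule J_left[rule_format])
  have commutator_a: "tri (nabla (ls a \<psi>)) - ls a (tri (nabla \<psi>)) = tri (tWS (d a) \<psi>)" for a \<psi>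
    by (rule commutator_Dirac_left_action[OF tri_bimod]) (rule nabla_leibniz[rule_format])
  have "additive J"
    using J_add unfolding additive_def .
  have J_Dirac: "J (tri (nabla \<phi>)) = ls (emb \<epsilon>') (tri (nabla (J \<phi>)))" for \<phi>
    by (rule real_structure_Dirac[OF calc bimodS tensWS tensSW tensWSbar \<open>additive J\<close>
          bimod_map_additive[OF sigma_bimod] sigma_inv bimod_map_additive[OF tri_bimod]])
      (use nabla_J tri_J in blast)+
  have tri_right: "tri (tWS \<xi> (rs \<phi> c)) = rs (tri (tWS \<xi> \<phi>)) c" for \<xi> \<phi> c
    by (simp only: tensor_product_right_action[OF tensWS, symmetric] bimod_map_right[OF tri_bimod])
  show ?thesis
  proof (intro conjI allI impI)
    fix a b \<phi>
    show "ls a (J (ls b (inv J \<phi>))) = J (ls b (inv J (ls a \<phi>)))"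
      by (simp only: conj_b bimodule_left_right_commute[OF bimodS])
    show "let D = (\<lambda>\<psi>. tri (nabla \<psi>));
              C = (\<lambda>\<psi>. D (ls a \<psi>) - ls a (D \<psi>));
              B = (\<lambda>\<psi>. J (ls b (inv J \<psi>)))
          in C (B \<phi>) - B (C \<phi>) = 0"
      unfolding Let_def conj_b commutator_a by (simp only: tri_right diff_self)
  qed (use J_sq J_Dirac in \<open>blast intro: bimod_map_left grading_anticommutes_Dirac[OF tensWS]\<close>)+
qed

end
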